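(* Let $R$ be a noetherian integral domain, $n\ge1$, $R[n]=R[t]/(t^n)$, and $M$ an $R[n]$-module of finite type. Then $\mathrm{Ext}^1_{R[n]}(M,R[n])$ is a torsion module.
   Context: An element $u=\sum_{i=0}^{n-1}u_it^i\in R[n]$ ($u_i\in R$) is a non-zero-divisor iff $u_0\ne0$; let $S_n$ be the set of non-zero-divisors. For an $R[n]$-module $N$, the torsion submodule $T(N)$ is the set of $m\in N$ such that $\alpha m=0$ for some $\alpha\in S_n$; $N$ is a torsion module if $N=T(N)$. *)

theory Defs
  imports "HOL-Computational_Algebra.Polynomial" "HOL-Algebra.Module"
begin

definition is_ideal :: "'a::comm_ring_1 set \<Rightarrow> bool" where
  "is_ideal I \<longleftrightarrow> 0 \<in> I \<and> (\<forall>x\<in>I. \<forall>y\<in>I. x + y \<in> I) \<and> (\<forall>r. \<forall>x\<in>I. r * x \<in> I)"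

definition ideal_gen :: "'a::comm_ring_1 set \<Rightarrow> 'a set" where
  "ideal_gen A = {x. \<exists>c. x = (\<Sum>a\<in>A. c a * a)}"

definition noetherian_ring :: "'a::comm_ring_1 itself \<Rightarrow> bool" where
  "noetherian_ring _ \<longleftrightarrow>
     (\<forall>I::'a set. is_ideal I \<longrightarrow> (\<exists>A. finite A \<and> A \<subseteq> I \<and> I = ideal_gen A))"

text \<open>Elements of R[n] are represented by polynomials of degree < n; multiplication
  is polynomial multiplication followed by truncation (reduction mod t^n).\<close>

definition trunc_poly :: "nat \<Rightarrow> 'a::comm_ring_1 poly \<Rightarrow> 'a poly" where
  "trunc_poly n p = (\<Sum>i<n. monom (coeff p i) i)"

definition Rn :: "nat \<Rightarrow> 'a::comm_ring_1 poly ring" where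
  "Rn n = \<lparr>carrier = {p. degree p < n}, mult = (\<lambda>p q. trunc_poly n (p * q)),
           one = 1, zero = 0, add = (+)\<rparr>"

text \<open>The set S_n of non-zero-divisors of R[n] (those u with u_0 \<noteq> 0).\<close>
definition Sn :: "nat \<Rightarrow> 'a::comm_ring_1 poly set" where
  "Sn n = {u \<in> carrier (Rn n). coeff u 0 \<noteq> 0}"

definition Rn_mod :: "nat \<Rightarrow> ('a::comm_ring_1 poly, 'a poly) module" where
  "Rn_mod n = \<lparr>carrier = {p. degree p < n}, mult = (\<lambda>p q. trunc_poly n (p * q)),
           one = 1, zero = 0, add = (+), smult = (\<lambda>a p. trunc_poly n (a * p))\<rparr>"

text \<open>The free R[n]-module R[n]^k, vectors as functions nat => R[n] supported on {..<k}.
  (The ring fields mult/one of the module record are irrelevant dummies.)\<close>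
definition free_mod :: "nat \<Rightarrow> nat \<Rightarrow> ('a::comm_ring_1 poly, nat \<Rightarrow> 'a poly) module" where
  "free_mod n k = \<lparr>carrier = {v. (\<forall>i<k. degree (v i) < n) \<and> (\<forall>i\<ge>k. v i = 0)},
       mult = (\<lambda>v w. (\<lambda>i. 0)), one = (\<lambda>i. 0), zero = (\<lambda>i. 0),
       add = (\<lambda>v w i. v i + w i), smult = (\<lambda>a v i. trunc_poly n (a * v i))\<rparr>"

definition mod_hom :: "('r, 'x) ring_scheme \<Rightarrow> ('r, 'b, 'c) module_scheme
    \<Rightarrow> ('r, 'd, 'e) module_scheme \<Rightarrow> ('b \<Rightarrow> 'd) \<Rightarrow> bool" where
  "mod_hom R M N f \<longleftrightarrow>
     f \<in> carrier M \<rightarrow> carrier N \<and>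
     (\<forall>x\<in>carrier M. \<forall>y\<in>carrier M. f (x \<oplus>\<^bsub>M\<^esub> y) = f x \<oplus>\<^bsub>N\<^esub> f y) \<and>
     (\<forall>a\<in>carrier R. \<forall>x\<in>carrier M. f (a \<odot>\<^bsub>M\<^esub> x) = a \<odot>\<^bsub>N\<^esub> f x)"

definition finite_type :: "('r, 'x) ring_scheme \<Rightarrow> ('r, 'b, 'c) module_scheme \<Rightarrow> bool" where
  "finite_type R M \<longleftrightarrow>
     (\<exists>A. finite A \<and> A \<subseteq> carrier M \<and>
        (\<forall>x\<in>carrier M. \<exists>c \<in> A \<rightarrow> carrier R. x = finsum M (\<lambda>a. c a \<odot>\<^bsub>M\<^esub> a) A))"

text \<open>Given a surjective R[n]-linear map pi : R[n]^k -> M with kernel K,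
  Ext^1(M,N) = Hom(K,N) / {restrictions to K of maps R[n]^k -> N}.\<close>

definition pres_kernel :: "nat \<Rightarrow> nat \<Rightarrow> ((nat \<Rightarrow> 'a::comm_ring_1 poly) \<Rightarrow> 'b)
    \<Rightarrow> ('a poly, 'b, 'c) module_scheme \<Rightarrow> (nat \<Rightarrow> 'a poly) set" where
  "pres_kernel n k \<pi> M = {v \<in> carrier (free_mod n k). \<pi> v = \<zero>\<^bsub>M\<^esub>}"

definition is_presentation :: "nat \<Rightarrow> nat \<Rightarrow> ((nat \<Rightarrow> 'a::comm_ring_1 poly) \<Rightarrow> 'b)
    \<Rightarrow> ('a poly, 'b, 'c) module_scheme \<Rightarrow> bool" where
  "is_presentation n k \<pi> M \<longleftrightarrow>
     mod_hom (Rn n) (free_mod n k) M \<pi> \<and> \<pi> ` carrier (free_mod n k) = carrier M"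

definition ext1_cocycles :: "nat \<Rightarrow> nat \<Rightarrow> ((nat \<Rightarrow> 'a::comm_ring_1 poly) \<Rightarrow> 'b)
    \<Rightarrow> ('a poly, 'b, 'c) module_scheme \<Rightarrow> ('a poly, 'd, 'e) module_scheme
    \<Rightarrow> ((nat \<Rightarrow> 'a poly) \<Rightarrow> 'd) set" where
  "ext1_cocycles n k \<pi> M N =
     {\<phi>. mod_hom (Rn n) ((free_mod n k)\<lparr>carrier := pres_kernel n k \<pi> M\<rparr>) N \<phi>}"

definition ext1_coboundary :: "nat \<Rightarrow> nat \<Rightarrow> ((nat \<Rightarrow> 'a::comm_ring_1 poly) \<Rightarrow> 'b)
    \<Rightarrow> ('a poly, 'b, 'c) module_scheme \<Rightarrow> ('a poly, 'd, 'e) module_scheme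
    \<Rightarrow> ((nat \<Rightarrow> 'a poly) \<Rightarrow> 'd) \<Rightarrow> bool" where
  "ext1_coboundary n k \<pi> M N \<phi> \<longleftrightarrow>
     (\<exists>\<psi>. mod_hom (Rn n) (free_mod n k) N \<psi> \<and> (\<forall>v\<in>pres_kernel n k \<pi> M. \<psi> v = \<phi> v))"

definition Ext1_is_torsion :: "nat \<Rightarrow> ('a::comm_ring_1 poly, 'b, 'c) module_scheme
    \<Rightarrow> ('a poly, 'd, 'e) module_scheme \<Rightarrow> bool" where
  "Ext1_is_torsion n M N \<longleftrightarrow>
     (\<forall>k \<pi>. is_presentation n k \<pi> M \<longrightarrow>
        (\<forall>\<phi>\<in>ext1_cocycles n k \<pi> M N. \<exists>\<alpha>\<in>Sn n.
            ext1_coboundary n k \<pi> M N (\<lambda>v. \<alpha> \<odot>\<^bsub>N\<^esub> \<phi> v)))"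

end

theory Submission
  imports Defs
begin

(* Reading off the coefficient of t^(n-1) identifies Hom_R[n](K, R[n]) with Hom_R(K, R) for every
   R[n]-submodule K of R[n]^k, because (p, q) |-> coefficient of t^(n-1) in p q is a perfect pairing
   on R[n]. Viewing K inside R^(kn), an R-linear form on K extends to all of R^(kn) after
   multiplication by some nonzero r in R (extend over the fraction field and clear denominators;
   below this is done by eliminating one coordinate at a time). Translating back, r phi is the
   restriction of an R[n]-linear map R[n]^k -> R[n], so the constant r, a non-zero-divisor of R[n],
   kills the class of phi in Ext^1. *)

lemma functional_extends_after_scaling:
  fixes K :: "('i \<Rightarrow> 'a::idom) set" and g :: "('i \<Rightarrow> 'a) \<Rightarrow> 'a"
  assumes "finite I"
    and "\<And>v i. v \<in> K \<Longrightarrow> i \<notin> I \<Longrightarrow> v i = 0"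
    and "\<And>v w c e. v \<in> K \<Longrightarrow> w \<in> K \<Longrightarrow> (\<lambda>i. c * v i + e * w i) \<in> K"
    and "\<And>v w c e. v \<in> K \<Longrightarrow> w \<in> K \<Longrightarrow> g (\<lambda>i. c * v i + e * w i) = c * g v + e * g w"
  shows "\<exists>r a. r \<noteq> 0 \<and> (\<forall>v\<in>K. (\<Sum>i\<in>I. a i * v i) = r * g v)"
  using assms
proof (induction I arbitrary: K rule: finite_induct)
  case empty
  have "g v = 0" if "v \<in> K" for v
  proof -
    have "v = (\<lambda>i. 0 * v i + 0 * v i)" using empty.prems(1) that by auto
    then show ?thesis using empty.prems(3)[OF that that, of 0 0] by simp
  qed
  then show ?case by (intro exI[of _ 1]) auto
next
  case (insert i0 I)
  define K0 where "K0 = {v\<in>K. v i0 = 0}"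
  have "\<exists>r a. r \<noteq> 0 \<and> (\<forall>v\<in>K0. (\<Sum>i\<in>I. a i * v i) = r * g v)"
  proof (rule insert.IH)
    show "\<And>v i. v \<in> K0 \<Longrightarrow> i \<notin> I \<Longrightarrow> v i = 0"
      using insert.prems(1) by (metis (mono_tags) K0_def insertE mem_Collect_eq)
  qed (use insert.prems in \<open>auto simp: K0_def\<close>)
  then obtain r0 a0
    where r0: "r0 \<noteq> 0" and a0: "\<And>v. v \<in> K0 \<Longrightarrow> (\<Sum>i\<in>I. a0 i * v i) = r0 * g v"
    by blast
  show ?case
  proof (cases "\<exists>w\<in>K. w i0 \<noteq> 0")
    case False
    then have "K0 = K" by (auto simp: K0_def)
    with r0 a0 show ?thesis using insert.hyps False by (intro exI[of _ r0] exI[of _ a0]) auto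
  next
    case True
    then obtain w where w: "w \<in> K" "w i0 \<noteq> 0" by blast
    define a where "a = (\<lambda>i. if i = i0 then r0 * g w - (\<Sum>i\<in>I. a0 i * w i) else w i0 * a0 i)"
    have "(\<Sum>i\<in>insert i0 I. a i * v i) = r0 * w i0 * g v" if v: "v \<in> K" for v
    proof -
      define u where "u = (\<lambda>i. w i0 * v i + (- v i0) * w i)"
      have "u \<in> K0" using insert.prems(2)[OF v w(1), of "w i0" "- v i0"] by (simp add: K0_def u_def)
      then have "r0 * g u = (\<Sum>i\<in>I. a0 i * u i)" by (simp add: a0)
      moreover have "g u = w i0 * g v - v i0 * g w"
        using insert.prems(3)[OF v w(1), of "w i0" "- v i0"] by (simp add: u_def)
      moreover have "(\<Sum>i\<in>I. a0 i * u i) = w i0 * (\<Sum>i\<in>I. a0 i * v i) - v i0 * (\<Sum>i\<in>I. a0 i * w i)"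
        by (simp add: u_def algebra_simps sum_distrib_left sum_subtractf)
      ultimately have "w i0 * (\<Sum>i\<in>I. a0 i * v i)
          = r0 * w i0 * g v - r0 * v i0 * g w + v i0 * (\<Sum>i\<in>I. a0 i * w i)"
        by (simp add: algebra_simps)
      moreover have "(\<Sum>i\<in>insert i0 I. a i * v i)
          = (r0 * g w - (\<Sum>i\<in>I. a0 i * w i)) * v i0 + w i0 * (\<Sum>i\<in>I. a0 i * v i)"
        using insert.hyps by (auto simp: a_def sum_distrib_left algebra_simps intro!: sum.cong)
      ultimately show ?thesis by (simp add: algebra_simps)
    qed
    moreover have "r0 * w i0 \<noteq> 0" using r0 w by simp
    ultimately show ?thesis by blast
  qed
qed

lemma coeff_trunc_poly: "coeff (trunc_poly n p) j = (if j < n then coeff p j else 0)"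
  by (simp add: trunc_poly_def coeff_sum coeff_monom)

lemma trunc_poly_0 [simp]: "trunc_poly n 0 = 0"
  by (simp add: trunc_poly_def)

lemma degree_trunc_poly_less: "n \<ge> 1 \<Longrightarrow> degree (trunc_poly n p) < n"
  using degree_le[of "n - 1" "trunc_poly n p"] by (fastforce simp: coeff_trunc_poly)

lemma trunc_poly_id: "degree p < n \<Longrightarrow> trunc_poly n p = p"
  by (auto simp: poly_eq_iff coeff_trunc_poly coeff_eq_0)

lemma trunc_poly_add: "trunc_poly n (p + q) = trunc_poly n p + trunc_poly n q"
  by (auto simp: poly_eq_iff coeff_trunc_poly)

lemma trunc_poly_sum: "trunc_poly n (\<Sum>i\<in>A. f i) = (\<Sum>i\<in>A. trunc_poly n (f i))"
  by (induction A rule: infinite_finite_induct) (auto simp: trunc_poly_add poly_eq_iff coeff_trunc_poly)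

lemma trunc_poly_mult_trunc_poly: "trunc_poly n (p * trunc_poly n q) = trunc_poly n (p * q)"
proof -
  have "coeff (p * trunc_poly n q) j = coeff (p * q) j" if "j < n" for j
    unfolding coeff_mult using that by (auto simp: coeff_trunc_poly intro!: sum.cong)
  then show ?thesis by (auto simp: poly_eq_iff coeff_trunc_poly)
qed

lemma trunc_poly_smult: "degree p < n \<Longrightarrow> trunc_poly n (Polynomial.smult c p) = Polynomial.smult c p"
  using trunc_poly_id[of "Polynomial.smult c p" n] degree_smult_le[of c p] by simp

lemma coeff_top_trunc_poly_monom_mult:
  "m < n \<Longrightarrow> coeff (trunc_poly n (monom 1 m * p)) (n - 1) = coeff p (n - 1 - m)"
  by (simp add: coeff_trunc_poly coeff_monom_mult)

lemma poly_eq_if_top_coeffs_of_shifts_eq: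
  assumes "degree p < n" "degree q < n"
    and "\<And>m. m < n \<Longrightarrow>
      coeff (trunc_poly n (monom 1 m * p)) (n - 1) = coeff (trunc_poly n (monom 1 m * q)) (n - 1)"
  shows "p = q"
proof (rule poly_eqI)
  fix j
  show "coeff p j = coeff q j"
  proof (cases "j < n")
    case True
    then have "n - 1 - j < n" "n - 1 - (n - 1 - j) = j" by auto
    with assms(3)[of "n - 1 - j"] show ?thesis
      by (metis coeff_top_trunc_poly_monom_mult)
  qed (use assms(1,2) in \<open>simp add: coeff_eq_0\<close>)
qed

definition free_dual ::
    "nat \<Rightarrow> nat \<Rightarrow> (nat \<times> nat \<Rightarrow> 'a::comm_ring_1) \<Rightarrow> (nat \<Rightarrow> 'a poly) \<Rightarrow> 'a poly" where
  "free_dual n k a v = trunc_poly n (\<Sum>i<k. (\<Sum>j<n. monom (a (i, j)) (n - 1 - j)) * v i)"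

lemma coeff_top_free_dual:
  assumes "n \<ge> 1"
  shows "coeff (free_dual n k a v) (n - 1) = (\<Sum>(i, j)\<in>{..<k} \<times> {..<n}. a (i, j) * coeff (v i) j)"
proof -
  have "coeff (free_dual n k a v) (n - 1)
      = (\<Sum>i<k. \<Sum>j<n. coeff (monom (a (i, j)) (n - 1 - j) * v i) (n - 1))"
    using assms by (simp add: free_dual_def coeff_trunc_poly coeff_sum sum_distrib_right)
  also have "\<dots> = (\<Sum>i<k. \<Sum>j<n. a (i, j) * coeff (v i) j)"
    by (intro sum.cong refl) (auto simp: coeff_monom_mult)
  finally show ?thesis by (simp add: sum.cartesian_product)
qed

lemma free_dual_add: "free_dual n k a (\<lambda>i. v i + w i) = free_dual n k a v + free_dual n k a w"
  by (simp add: free_dual_def distrib_left sum.distrib trunc_poly_add)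

lemma free_dual_trunc_poly_mult:
  "free_dual n k a (\<lambda>i. trunc_poly n (b * v i)) = trunc_poly n (b * free_dual n k a v)"
proof -
  define c where "c i = (\<Sum>j<n. monom (a (i, j)) (n - 1 - j))" for i
  have dual_c: "free_dual n k a v = trunc_poly n (\<Sum>i<k. c i * v i)" for v
    by (simp add: free_dual_def c_def)
  have "free_dual n k a (\<lambda>i. trunc_poly n (b * v i))
      = (\<Sum>i<k. trunc_poly n (c i * trunc_poly n (b * v i)))"
    by (simp add: dual_c trunc_poly_sum)
  also have "\<dots> = (\<Sum>i<k. trunc_poly n (b * (c i * v i)))"
    by (simp add: trunc_poly_mult_trunc_poly algebra_simps)
  also have "\<dots> = trunc_poly n (b * free_dual n k a v)"
    by (simp add: dual_c trunc_poly_mult_trunc_poly trunc_poly_sum sum_distrib_left)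
  finally show ?thesis .
qed

lemma free_dual_mod_hom:
  assumes "n \<ge> 1"
  shows "mod_hom (Rn n) (free_mod n k) (Rn_mod n) (free_dual n k a)"
  using assms
  by (auto simp: mod_hom_def free_mod_def Rn_def Rn_mod_def free_dual_add free_dual_trunc_poly_mult
      free_dual_def degree_trunc_poly_less)

lemma pres_kernel_add_closed:
  assumes "module (Rn n) M" and "mod_hom (Rn n) (free_mod n k) M \<pi>"
    and "v \<in> pres_kernel n k \<pi> M" "w \<in> pres_kernel n k \<pi> M"
  shows "(\<lambda>i. v i + w i) \<in> pres_kernel n k \<pi> M"
proof -
  interpret module "Rn n" M by (fact assms(1))
  from assms(3,4) have "(\<lambda>i. v i + w i) \<in> carrier (free_mod n k)"
    by (auto simp: pres_kernel_def free_mod_def intro: degree_add_less)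
  with assms(2-4) show ?thesis
    by (auto simp: pres_kernel_def mod_hom_def free_mod_def)
qed

lemma pres_kernel_trunc_poly_mult_closed:
  assumes "n \<ge> 1" and "module (Rn n) M" and "mod_hom (Rn n) (free_mod n k) M \<pi>"
    and "degree b < n" and "v \<in> pres_kernel n k \<pi> M"
  shows "(\<lambda>i. trunc_poly n (b * v i)) \<in> pres_kernel n k \<pi> M"
proof -
  interpret module "Rn n" M by (fact assms(2))
  from assms(1,5) have "(\<lambda>i. trunc_poly n (b * v i)) \<in> carrier (free_mod n k)"
    by (auto simp: pres_kernel_def free_mod_def degree_trunc_poly_less)
  with assms(3-5) show ?thesis
    by (auto simp: pres_kernel_def mod_hom_def free_mod_def Rn_def)
qed

lemma Rn_hom_extends_after_scaling:
  fixes K :: "(nat \<Rightarrow> 'a::idom poly) set" and \<phi> :: "(nat \<Rightarrow> 'a poly) \<Rightarrow> 'a poly"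
  assumes n: "n \<ge> 1"
    and K_free: "K \<subseteq> carrier (free_mod n k)"
    and K_add: "\<And>v w. v \<in> K \<Longrightarrow> w \<in> K \<Longrightarrow> (\<lambda>i. v i + w i) \<in> K"
    and K_mult: "\<And>b v. degree b < n \<Longrightarrow> v \<in> K \<Longrightarrow> (\<lambda>i. trunc_poly n (b * v i)) \<in> K"
    and \<phi>: "mod_hom (Rn n) ((free_mod n k)\<lparr>carrier := K\<rparr>) (Rn_mod n) \<phi>"
  obtains r \<psi> where "r \<noteq> 0" "mod_hom (Rn n) (free_mod n k) (Rn_mod n) \<psi>"
    "\<And>v. v \<in> K \<Longrightarrow> \<psi> v = Polynomial.smult r (\<phi> v)"
proof -
  from \<phi> have \<phi>_degree: "\<And>v. v \<in> K \<Longrightarrow> degree (\<phi> v) < n"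
    and \<phi>_add: "\<And>v w. v \<in> K \<Longrightarrow> w \<in> K \<Longrightarrow> \<phi> (\<lambda>i. v i + w i) = \<phi> v + \<phi> w"
    and \<phi>_mult: "\<And>b v. degree b < n \<Longrightarrow> v \<in> K \<Longrightarrow>
      \<phi> (\<lambda>i. trunc_poly n (b * v i)) = trunc_poly n (b * \<phi> v)"
    by (auto simp: mod_hom_def free_mod_def Rn_def Rn_mod_def)
  have K_degree: "degree (v i) < n" if "v \<in> K" for v i
    using K_free that n by (cases "i < k") (auto simp: free_mod_def)
  have const_mult: "(\<lambda>i. trunc_poly n (Polynomial.smult c (v i))) = (\<lambda>i. Polynomial.smult c (v i))"
    if "v \<in> K" for v c
    using K_degree[OF that] by (simp add: trunc_poly_smult)
  have K_lincomb: "(\<lambda>i. Polynomial.smult c (v i) + Polynomial.smult e (w i)) \<in> K"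
    and \<phi>_lincomb: "\<phi> (\<lambda>i. Polynomial.smult c (v i) + Polynomial.smult e (w i))
      = Polynomial.smult c (\<phi> v) + Polynomial.smult e (\<phi> w)"
    if "v \<in> K" "w \<in> K" for v w c e
    using that n K_add K_mult[of "[:c:]" v] K_mult[of "[:e:]" w] \<phi>_add
      \<phi>_mult[of "[:c:]" v] \<phi>_mult[of "[:e:]" w]
    by (simp_all add: const_mult trunc_poly_smult \<phi>_degree)

  define co :: "(nat \<Rightarrow> 'a poly) \<Rightarrow> nat \<times> nat \<Rightarrow> 'a"
    where "co v = (\<lambda>(i, j). coeff (v i) j)" for v
  have "inj co"
    by (rule injI) (auto simp: co_def fun_eq_iff poly_eq_iff split: prod.splits)
  define g where "g x = coeff (\<phi> (inv_into UNIV co x)) (n - 1)" for x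
  have g_co: "g (co v) = coeff (\<phi> v) (n - 1)" for v
    using \<open>inj co\<close> by (simp add: g_def)
  have co_lincomb: "(\<lambda>ij. c * co v ij + e * co w ij)
      = co (\<lambda>i. Polynomial.smult c (v i) + Polynomial.smult e (w i))" for v w c e
    by (auto simp: co_def fun_eq_iff)
  have "\<exists>r a. r \<noteq> 0 \<and> (\<forall>x\<in>co ` K. (\<Sum>ij\<in>{..<k} \<times> {..<n}. a ij * x ij) = r * g x)"
  proof (rule functional_extends_after_scaling)
    show "x ij = 0" if x: "x \<in> co ` K" and ij: "ij \<notin> {..<k} \<times> {..<n}" for x ij
    proof -
      obtain v i j where "v \<in> K" "x = co v" "ij = (i, j)" "\<not> i < k \<or> \<not> j < n"
        using x ij by (cases ij) auto
      moreover from \<open>v \<in> K\<close> K_free have "\<not> i < k \<Longrightarrow> v i = 0" by (auto simp: free_mod_def)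
      moreover from \<open>v \<in> K\<close> K_degree have "\<not> j < n \<Longrightarrow> coeff (v i) j = 0"
        by (meson coeff_eq_0 le_less_trans not_less)
      ultimately show ?thesis by (auto simp: co_def)
    qed
    show "(\<lambda>ij. c * x ij + e * y ij) \<in> co ` K" if "x \<in> co ` K" "y \<in> co ` K" for x y c e
      using that by (auto simp: co_lincomb K_lincomb)
    show "g (\<lambda>ij. c * x ij + e * y ij) = c * g x + e * g y" if "x \<in> co ` K" "y \<in> co ` K" for x y c e
      using that by (auto simp: co_lincomb g_co \<phi>_lincomb)
  qed simp
  then obtain r a where "r \<noteq> 0"
    and ra: "\<And>v. v \<in> K \<Longrightarrow>
      (\<Sum>ij\<in>{..<k} \<times> {..<n}. a ij * co v ij) = r * coeff (\<phi> v) (n - 1)"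
    using g_co by auto
  define \<psi> where "\<psi> = free_dual n k a"
  have top_\<psi>: "coeff (\<psi> v) (n - 1) = r * coeff (\<phi> v) (n - 1)" if "v \<in> K" for v
    using ra[OF that] coeff_top_free_dual[OF n, of k a v] by (simp add: \<psi>_def co_def case_prod_beta')
  have "\<psi> v = Polynomial.smult r (\<phi> v)" if v: "v \<in> K" for v
  proof (rule poly_eq_if_top_coeffs_of_shifts_eq)
    show "degree (\<psi> v) < n" using n by (simp add: \<psi>_def free_dual_def degree_trunc_poly_less)
    show "degree (Polynomial.smult r (\<phi> v)) < n"
      using \<phi>_degree[OF v] degree_smult_le le_less_trans by blast
    fix m assume "m < n"
    define u where "u i = trunc_poly n (monom 1 m * v i)" for i
    have "degree (monom (1::'a) m) < n" using \<open>m < n\<close> by (simp add: degree_monom_eq)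
    then have "u \<in> K" and \<phi>_u: "\<phi> u = trunc_poly n (monom 1 m * \<phi> v)"
      using K_mult \<phi>_mult v by (auto simp: u_def[abs_def])
    have "coeff (trunc_poly n (monom 1 m * \<psi> v)) (n - 1) = coeff (\<psi> u) (n - 1)"
      by (simp add: \<psi>_def u_def[abs_def] free_dual_trunc_poly_mult)
    also have "\<dots> = r * coeff (\<phi> u) (n - 1)" using top_\<psi> \<open>u \<in> K\<close> by simp
    also have "\<dots> = coeff (trunc_poly n (monom 1 m * Polynomial.smult r (\<phi> v))) (n - 1)"
      by (simp add: \<phi>_u coeff_trunc_poly)
    finally show "coeff (trunc_poly n (monom 1 m * \<psi> v)) (n - 1)
      = coeff (trunc_poly n (monom 1 m * Polynomial.smult r (\<phi> v))) (n - 1)" .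
  qed
  with \<open>r \<noteq> 0\<close> free_dual_mod_hom[OF n] show ?thesis
    using that unfolding \<psi>_def by blast
qed

theorem proposition3p4p2:
  fixes M :: "('a::idom poly, 'm) module" and n :: nat
  assumes "noetherian_ring TYPE('a)"
    and "n \<ge> 1"
    and "module (Rn n) M"
    and "finite_type (Rn n) M"
  shows "Ext1_is_torsion n M (Rn_mod n)"
  unfolding Ext1_is_torsion_def
proof (intro allI impI ballI)
  fix k \<pi> \<phi>
  assume "is_presentation n k \<pi> M" and "\<phi> \<in> ext1_cocycles n k \<pi> M (Rn_mod n)"
  then have \<pi>: "mod_hom (Rn n) (free_mod n k) M \<pi>"
    and \<phi>: "mod_hom (Rn n) ((free_mod n k)\<lparr>carrier := pres_kernel n k \<pi> M\<rparr>) (Rn_mod n) \<phi>"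
    by (simp_all add: is_presentation_def ext1_cocycles_def)
  obtain r \<psi> where "r \<noteq> 0" "mod_hom (Rn n) (free_mod n k) (Rn_mod n) \<psi>"
    "\<And>v. v \<in> pres_kernel n k \<pi> M \<Longrightarrow> \<psi> v = Polynomial.smult r (\<phi> v)"
  proof (rule Rn_hom_extends_after_scaling[OF \<open>n \<ge> 1\<close> _ _ _ \<phi>])
    show "pres_kernel n k \<pi> M \<subseteq> carrier (free_mod n k)" by (auto simp: pres_kernel_def)
  qed (use assms(2,3) \<pi> in \<open>auto intro: pres_kernel_add_closed pres_kernel_trunc_poly_mult_closed\<close>)
  moreover have "[:r:] \<odot>\<^bsub>Rn_mod n\<^esub> \<phi> v = Polynomial.smult r (\<phi> v)"
    if "v \<in> pres_kernel n k \<pi> M" for v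
    using \<phi> that by (simp add: Rn_mod_def mod_hom_def trunc_poly_smult Pi_iff)
  ultimately show "\<exists>\<alpha>\<in>Sn n. ext1_coboundary n k \<pi> M (Rn_mod n) (\<lambda>v. \<alpha> \<odot>\<^bsub>Rn_mod n\<^esub> \<phi> v)"
    using \<open>n \<ge> 1\<close> unfolding ext1_coboundary_def
    by (intro bexI[of _ "[:r:]"]) (auto simp: Sn_def Rn_def)
qed

end
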